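(* Let $N\ge 1$ be an integer, let $0<\sigma_0^2<\sigma_1^2$, and let $\alpha,\beta\in(0.5,1)$. Define $\eta_0:=\Gamma^{-1}\!\left(\tfrac N2,(1-\alpha)\Gamma(\tfrac N2)\right)\sigma_0^2$ and let $\eta_1<\eta_2$ be the GLRT thresholds, i.e., the two solutions of $L_1(\eta)=\lambda_1$ for the constant $\lambda_1>1$ chosen so that $$\frac{\Gamma(\frac N2,\frac{\eta_1}{\sigma_1^2})-\Gamma(\frac N2,\frac{\eta_2}{\sigma_1^2})}{\Gamma(\frac N2)}=\beta .$$ Let $\eta_1^*:=\Gamma^{-1}\!\left(\tfrac N2,(1-\alpha)\Gamma(\tfrac N2)\right)\sigma_0^2$ and let $\eta_2^*\neq\eta_1^*$ be a solution of $\left(\frac{\eta_1^*}{\eta_2^*}\right)^{N/2}\exp\!\left(\frac{\eta_2^*-\eta_1^*}{2\sigma_1^2}\right)=1$. If $$\beta>\frac{\Gamma(\frac N2,\frac{\eta_1^*}{\sigma_1^2})}{\Gamma(\frac N2)}-\frac{\Gamma(\frac N2,\frac{\eta_2^*}{\sigma_1^2})}{\Gamma(\frac N2)},$$ then the decision regions $\mathcal{R}_0=\{Y<\eta_0\}$ and $\mathcal{R}_1=\{\eta_1<Y<\eta_2\}$ overlap, i.e., $\eta_1<\eta_0$.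
   Context: Observations $y_0,\dots,y_{N-1}$ are i.i.d. $\mathcal{N}(0,\sigma^2)$; the test statistic is $Y=\sum_{n=0}^{N-1}y_n^2$. Hypotheses: $\mathcal{H}_0:\sigma^2=\sigma_0^2$ (channel idle), $\mathcal{H}_1:\sigma^2=\sigma_1^2$ (legitimate user only), $\mathcal{H}_2:\sigma^2\in(\sigma_0^2,\sigma_1^2)\cup(\sigma_1^2,\infty)$ (illegitimate user present). $\Gamma(a)$ is the Gamma function, $\Gamma(a,x)=\int_x^\infty t^{a-1}e^{-t}dt$ the upper incomplete Gamma function, and $\Gamma^{-1}(a,\cdot)$ the inverse of $x\mapsto\Gamma(a,x)$. The GLRT likelihood ratio as a function of $Y>0$ is $L_1(Y)=\left(\frac{N\sigma_1^2}{Y}\right)^{N/2}\exp\!\left(\frac{Y}{2\sigma_1^2}-\frac N2\right)$, which decreases on $(0,N\sigma_1^2)$, increases on $(N\sigma_1^2,\infty)$ and has minimum value $1$; so for $\lambda_1>1$ the equation $L_1(\eta)=\lambda_1$ has two solutions $\eta_1<N\sigma_1^2<\eta_2$. The detection subproblem declares $\mathcal{H}_0$ on $\mathcal{R}_0=\{Y<\eta_0\}$; the recognition subproblem declares $\mathcal{H}_1$ on $\mathcal{R}_1=\{\eta_1<Y<\eta_2\}$; "overlapping" means $\mathcal{R}_0\cap\mathcal{R}_1\neq\emptyset$, i.e., $\eta_1<\eta_0$. *)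

theory Defs
  imports "HOL-Analysis.Analysis"
begin

definition upper_Gamma :: "real \<Rightarrow> real \<Rightarrow> real" where
  "upper_Gamma a x = (LBINT t:{x..}. t powr (a - 1) * exp (- t))"

text \<open>Inverse of x \<mapsto> upper_Gamma a x on the positive reals (where it is strictly decreasing).\<close>
definition upper_Gamma_inv :: "real \<Rightarrow> real \<Rightarrow> real" where
  "upper_Gamma_inv a y = (THE x. x > 0 \<and> upper_Gamma a x = y)"

definition L1 :: "nat \<Rightarrow> real \<Rightarrow> real \<Rightarrow> real" where
  "L1 N s1 Y = (real N * s1 / Y) powr (real N / 2) * exp (Y / (2 * s1) - real N / 2)"

end

theory Submission
  imports Defs
begin

text \<open>Both the GLRT thresholds eta1 < eta2 and the pair eta1s, eta2s are level sets of
  Y / (2 s1) - (N/2) ln Y, the logarithm of L1 up to an additive constant, which strictly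
  decreases up to N s1 and strictly increases afterwards. Since eta0 = eta1s, assuming
  eta1s \<le> eta1 < N s1 makes eta1s the left point of its level set and nests the level sets:
  eta2 \<le> eta2s. As the upper incomplete Gamma function is decreasing, the mass beta of
  [eta1, eta2] would then be at most that of [eta1s, eta2s], contrary to the hypothesis.
  That eta0 is positive at all requires the inverse of the upper incomplete Gamma function
  to exist, which follows from its continuity and its limits Gamma a at 0 and 0 at infinity.\<close>

definition Gamma_integrand :: "real \<Rightarrow> real \<Rightarrow> real" where
  "Gamma_integrand a t = t powr (a - 1) * exp (- t)"

lemma Gamma_integrand_has_integral:
  assumes "a > 0"
  shows "(Gamma_integrand a has_integral Gamma a) {0..}"
proof -
  have "Gamma_integrand a = (\<lambda>t. t powr (a - 1) / exp t)"
    by (simp add: Gamma_integrand_def exp_minus divide_inverse fun_eq_iff)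
  then show ?thesis using Gamma_integral_real[OF assms] by simp
qed

lemma set_integrable_Gamma_integrand:
  assumes "a > 0" "0 \<le> x"
  shows "set_integrable lborel {x..} (Gamma_integrand a)"
proof -
  have "Gamma_integrand a absolutely_integrable_on {0..}"
    using Gamma_integrand_has_integral[OF assms(1)]
    by (intro nonnegative_absolutely_integrable_1) (auto simp: Gamma_integrand_def)
  moreover have "(\<lambda>t::real. indicator {0..} t *\<^sub>R Gamma_integrand a t)
      \<in> borel_measurable lborel"
    unfolding Gamma_integrand_def by measurable
  ultimately have "set_integrable lborel {0..} (Gamma_integrand a)"
    unfolding absolutely_integrable_on_def set_integrable_def using integrable_completion by blast
  then show ?thesis by (rule set_integrable_subset) (use assms in auto)
qed

lemma upper_Gamma_zero:
  assumes "a > 0"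
  shows "upper_Gamma a 0 = Gamma a"
  using set_borel_integral_eq_integral(2)[OF set_integrable_Gamma_integrand[OF assms order_refl]]
    integral_unique[OF Gamma_integrand_has_integral[OF assms]]
  by (simp add: upper_Gamma_def Gamma_integrand_def)

lemma upper_Gamma_split:
  assumes "a > 0" "0 \<le> x" "x \<le> y"
  shows "upper_Gamma a x = (LBINT t:{x..<y}. Gamma_integrand a t) + upper_Gamma a y"
proof -
  have "{x..} = {x..<y} \<union> {y..}" using assms by auto
  then have "(LBINT t:{x..}. Gamma_integrand a t)
      = (LBINT t:{x..<y}. Gamma_integrand a t) + (LBINT t:{y..}. Gamma_integrand a t)"
    using assms
    by (simp, intro set_integral_Un set_integrable_Gamma_integrand
        set_integrable_subset[OF set_integrable_Gamma_integrand[OF assms(1,2)]]) auto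
  then show ?thesis by (simp add: upper_Gamma_def Gamma_integrand_def)
qed

lemma upper_Gamma_antimono:
  assumes "a > 0" "0 \<le> x" "x \<le> y"
  shows "upper_Gamma a y \<le> upper_Gamma a x"
proof -
  have "0 \<le> (LBINT t:{x..<y}. Gamma_integrand a t)"
    unfolding set_lebesgue_integral_def Gamma_integrand_def
    by (intro Bochner_Integration.integral_nonneg) (auto simp: indicator_def)
  then show ?thesis using upper_Gamma_split[OF assms] by simp
qed

lemma upper_Gamma_strict_antimono:
  assumes a: "a > 0" and "0 < x" "x < y"
  shows "upper_Gamma a y < upper_Gamma a x"
proof -
  define c where "c = min (x powr (a - 1)) (y powr (a - 1)) * exp (- y)"
  have "c \<le> Gamma_integrand a t" if t: "t \<in> {x..<y}" for t
  proof -
    have "min (x powr (a - 1)) (y powr (a - 1)) \<le> t powr (a - 1)"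
      using t assms powr_mono2[of "a - 1" x t] powr_mono2'[of "a - 1" t y] by force
    moreover have "exp (- y) \<le> exp (- t)" using t by simp
    ultimately show ?thesis unfolding c_def Gamma_integrand_def by (intro mult_mono) auto
  qed
  then have "(LBINT t:{x..<y}. c) \<le> (LBINT t:{x..<y}. Gamma_integrand a t)"
    using assms
    by (intro set_integral_mono
        set_integrable_subset[OF set_integrable_Gamma_integrand[OF a, of x]])
      (auto simp: set_integrable_def)
  moreover have "(LBINT t:{x..<y}. c) = (y - x) * c"
    using assms by (subst set_integral_const) auto
  moreover have "(y - x) * c > 0" using assms by (simp add: c_def)
  ultimately show ?thesis using upper_Gamma_split[OF a, of x y] assms by simp
qed

lemma upper_Gamma_diff_mono:
  assumes "a > 0" "0 \<le> x'" "x' \<le> x" "x \<le> y" "y \<le> y'"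
  shows "upper_Gamma a x - upper_Gamma a y \<le> upper_Gamma a x' - upper_Gamma a y'"
  using upper_Gamma_antimono[of a x' x] upper_Gamma_antimono[of a y y'] assms by simp

lemma upper_Gamma_of_nat_tendsto_zero:
  assumes "a > 0"
  shows "(\<lambda>n. upper_Gamma a (real n)) \<longlonglongrightarrow> 0"
proof -
  have "x \<notin> (\<Inter>n. {real n..})" for x :: real
    using reals_Archimedean2[of x] by (auto simp: not_le)
  then have "(\<Inter>n. {real n..}) = {}" by blast
  moreover have "(\<lambda>n. LBINT t:{real n..}. Gamma_integrand a t)
      \<longlonglongrightarrow> (LBINT t:(\<Inter>n. {real n..}). Gamma_integrand a t)"
    by (rule set_integral_cont_down)
      (use set_integrable_Gamma_integrand[OF assms order_refl] in \<open>auto simp: decseq_def\<close>)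
  ultimately show ?thesis
    by (simp add: upper_Gamma_def Gamma_integrand_def set_lebesgue_integral_def)
qed

lemma continuous_on_upper_Gamma:
  assumes a: "a > 0"
  shows "continuous_on {0..b} (upper_Gamma a)"
proof -
  have integrable: "set_integrable lborel S (Gamma_integrand a)"
    if "S \<in> sets borel" "S \<subseteq> {0..}" for S
    using set_integrable_subset[OF set_integrable_Gamma_integrand[OF a order_refl]] that by simp
  have upper_Gamma_eq: "upper_Gamma a x = Gamma a - integral {0..x} (Gamma_integrand a)"
    if "0 \<le> x" for x
  proof -
    have "{0..x} = {0..<x} \<union> {x}" using that by auto
    then have "(LBINT t:{0..x}. Gamma_integrand a t)
        = (LBINT t:{0..<x}. Gamma_integrand a t) + (LBINT t:{x}. Gamma_integrand a t)"
      by (simp only:) (rule set_integral_Un; auto intro!: integrable)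
    moreover have "(LBINT t:{x}. Gamma_integrand a t) = 0"
      using set_integral_at_point[OF integrable] that by simp
    ultimately show ?thesis
      using upper_Gamma_split[OF a order_refl that] upper_Gamma_zero[OF a]
        set_borel_integral_eq_integral(2)[OF integrable[of "{0..x}"]] by auto
  qed
  have "continuous_on {0..b} (\<lambda>x. Gamma a - integral {0..x} (Gamma_integrand a))"
    using set_borel_integral_eq_integral(1)[OF integrable[of "{0..b}"]]
    by (intro continuous_intros indefinite_integral_continuous_1) auto
  then show ?thesis by (rule continuous_on_eq) (simp add: upper_Gamma_eq)
qed

lemma upper_Gamma_inv:
  assumes a: "a > 0" and y: "0 < y" "y < Gamma a"
  shows "upper_Gamma_inv a y > 0" "upper_Gamma a (upper_Gamma_inv a y) = y"
proof -
  obtain n where n: "upper_Gamma a (real n) < y"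
    using order_tendstoD(2)[OF upper_Gamma_of_nat_tendsto_zero[OF a] y(1)]
    by (auto simp: eventually_sequentially)
  have "\<exists>x\<ge>0. x \<le> real n \<and> upper_Gamma a x = y"
    by (rule IVT2') (use n y continuous_on_upper_Gamma[OF a] upper_Gamma_zero[OF a] in auto)
  then obtain x where x: "0 \<le> x" "upper_Gamma a x = y" by blast
  moreover have "x \<noteq> 0" using x upper_Gamma_zero[OF a] y by auto
  ultimately have x_pos: "x > 0" by simp
  have "\<exists>!x. x > 0 \<and> upper_Gamma a x = y"
  proof (rule ex1I)
    show "x > 0 \<and> upper_Gamma a x = y" using x x_pos by simp
    fix z assume z: "z > 0 \<and> upper_Gamma a z = y"
    then show "z = x"
    proof (cases z x rule: linorder_cases)
      case less
      then show ?thesis using upper_Gamma_strict_antimono[OF a _ less] z x by simp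
    next
      case greater
      then show ?thesis using upper_Gamma_strict_antimono[OF a x_pos greater] z x by simp
    qed
  qed
  then have "upper_Gamma_inv a y > 0 \<and> upper_Gamma a (upper_Gamma_inv a y) = y"
    unfolding upper_Gamma_inv_def by (rule theI')
  then show "upper_Gamma_inv a y > 0" "upper_Gamma a (upper_Gamma_inv a y) = y" by auto
qed

definition L1_exponent :: "nat \<Rightarrow> real \<Rightarrow> real \<Rightarrow> real" where
  "L1_exponent N s1 Y = Y / (2 * s1) - real N / 2 * ln Y"

lemma L1_exponent_diff:
  assumes "0 < s1"
  shows "2 * (L1_exponent N s1 v - L1_exponent N s1 u)
    = (v - u) / s1 - real N * (ln v - ln u)"
  using assms by (simp add: L1_exponent_def field_simps)

lemma L1_eq_exp_L1_exponent:
  assumes "0 < s1" "N \<ge> 1" "0 < Y"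
  shows "L1 N s1 Y = exp (real N / 2 * ln (real N * s1) - real N / 2 + L1_exponent N s1 Y)"
proof -
  have "L1 N s1 Y = exp (real N / 2 * ln (real N * s1 / Y)) * exp (Y / (2 * s1) - real N / 2)"
    using assms by (simp add: L1_def powr_def)
  also have "\<dots> = exp (real N / 2 * ln (real N * s1) - real N / 2 + L1_exponent N s1 Y)"
    using assms by (simp add: L1_exponent_def ln_div algebra_simps flip: exp_add)
  finally show ?thesis .
qed

lemma L1_exponent_strict_antimono:
  assumes "0 < s1" "0 < u" "u < v" "v \<le> real N * s1"
  shows "L1_exponent N s1 v < L1_exponent N s1 u"
proof -
  have "0 < real N * s1" using assms by linarith
  then have N: "real N > 0" using assms by (simp add: zero_less_mult_iff)
  have "(v - u) / (real N * s1) \<le> (v - u) / v"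
    by (rule divide_left_mono) (use assms N in auto)
  also have "\<dots> < ln v - ln u"
    using ln_diff_less[of u v] assms by (simp add: divide_simps left_diff_distrib)
  finally have "(v - u) / s1 < real N * (ln v - ln u)"
    using N assms by (simp add: field_simps)
  then show ?thesis using L1_exponent_diff[OF assms(1), of N v u] by simp
qed

lemma L1_exponent_strict_mono:
  assumes "0 < s1" "N \<ge> 1" "real N * s1 \<le> u" "u < v"
  shows "L1_exponent N s1 u < L1_exponent N s1 v"
proof -
  have "0 < real N * s1" using assms by simp
  then have "0 < u" using assms by linarith
  have "ln v - ln u < (v - u) / u"
    using ln_diff_less[of v u] assms \<open>0 < u\<close> by simp
  also have "\<dots> \<le> (v - u) / (real N * s1)"
    using assms mult_pos_pos[OF \<open>0 < u\<close> \<open>0 < real N * s1\<close>]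
    by (simp add: divide_left_mono)
  finally have "real N * (ln v - ln u) < (v - u) / s1"
    using assms by (simp add: field_simps)
  then show ?thesis using L1_exponent_diff[OF assms(1), of N v u] by simp
qed

lemma L1_exponent_eq_if_L1_eq:
  assumes "0 < s1" "N \<ge> 1" "0 < p" "0 < q" "L1 N s1 p = L1 N s1 q"
  shows "L1_exponent N s1 p = L1_exponent N s1 q"
  using assms by (simp add: L1_eq_exp_L1_exponent)

lemma L1_exponent_eq_if_ratio_eq_one:
  assumes "0 < p" "0 < q" "(p / q) powr (real N / 2) * exp ((q - p) / (2 * s1)) = 1"
  shows "L1_exponent N s1 p = L1_exponent N s1 q"
proof -
  have "(p / q) powr (real N / 2) * exp ((q - p) / (2 * s1))
      = exp (L1_exponent N s1 q - L1_exponent N s1 p)"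
    using assms by (simp add: powr_def ln_div L1_exponent_def diff_divide_distrib algebra_simps
        flip: exp_add)
  then show ?thesis using assms(3) by simp
qed

lemma L1_exponent_level_set_straddles:
  assumes "0 < s1" "N \<ge> 1" "0 < p" "p < q" "L1_exponent N s1 p = L1_exponent N s1 q"
  shows "p < real N * s1" "real N * s1 < q"
proof -
  show "p < real N * s1"
  proof (rule ccontr)
    assume "\<not> p < real N * s1"
    then show False using L1_exponent_strict_mono[OF assms(1,2) _ assms(4)] assms(5) by simp
  qed
  show "real N * s1 < q"
  proof (rule ccontr)
    assume "\<not> real N * s1 < q"
    then show False using L1_exponent_strict_antimono[OF assms(1,3,4), of N] assms(5) by simp
  qed
qed

lemma L1_exponent_level_sets_nested:
  assumes "0 < s1" "N \<ge> 1" "0 < p'" "p' \<le> p" "p < q" "p' < q'"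
    and "L1_exponent N s1 p = L1_exponent N s1 q" "L1_exponent N s1 p' = L1_exponent N s1 q'"
  shows "q \<le> q'"
proof (rule ccontr)
  assume "\<not> q \<le> q'"
  have "0 < p" using assms by linarith
  have "p < real N * s1"
    using L1_exponent_level_set_straddles(1)[OF assms(1,2) \<open>0 < p\<close> assms(5,7)] .
  have "real N * s1 < q'"
    using L1_exponent_level_set_straddles(2)[OF assms(1,2,3,6,8)] .
  have "L1_exponent N s1 p \<le> L1_exponent N s1 p'"
    using L1_exponent_strict_antimono[of s1 p' p N] assms \<open>p < real N * s1\<close>
    by (cases "p' = p") auto
  moreover have "L1_exponent N s1 q' < L1_exponent N s1 q"
    using L1_exponent_strict_mono[of s1 N q' q] assms \<open>real N * s1 < q'\<close> \<open>\<not> q \<le> q'\<close>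
    by simp
  ultimately show False using assms by simp
qed

theorem theorem1:
  fixes N :: nat and s0 s1 alpha beta lam1 eta0 eta1 eta2 eta1s eta2s :: real
  assumes N: "N \<ge> 1"
    and s: "0 < s0" "s0 < s1"
    and alpha: "0.5 < alpha" "alpha < 1"
    and beta: "0.5 < beta" "beta < 1"
    and eta0: "eta0 = upper_Gamma_inv (real N / 2) ((1 - alpha) * Gamma (real N / 2)) * s0"
    and lam1: "lam1 > 1"
    and eta12: "0 < eta1" "eta1 < eta2" "L1 N s1 eta1 = lam1" "L1 N s1 eta2 = lam1"
    and betaeq: "(upper_Gamma (real N / 2) (eta1 / s1) - upper_Gamma (real N / 2) (eta2 / s1))
                / Gamma (real N / 2) = beta"
    and eta1s: "eta1s = upper_Gamma_inv (real N / 2) ((1 - alpha) * Gamma (real N / 2)) * s0"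
    and eta2s: "0 < eta2s" "eta2s \<noteq> eta1s"
       "(eta1s / eta2s) powr (real N / 2) * exp ((eta2s - eta1s) / (2 * s1)) = 1"
    and cond: "beta > upper_Gamma (real N / 2) (eta1s / s1) / Gamma (real N / 2)
                    - upper_Gamma (real N / 2) (eta2s / s1) / Gamma (real N / 2)"
  shows "eta1 < eta0"
proof (rule ccontr)
  define a where "a = real N / 2"
  have a: "a > 0" and s1: "0 < s1" and Gamma_pos: "Gamma a > 0"
    using N s by (simp_all add: a_def)
  have "0 < (1 - alpha) * Gamma a" "(1 - alpha) * Gamma a < Gamma a"
    using alpha Gamma_pos by simp_all
  then have "eta1s > 0"
    using upper_Gamma_inv(1)[OF a] s unfolding eta1s a_def[symmetric] by simp
  assume "\<not> eta1 < eta0"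
  moreover have "eta0 = eta1s" using eta0 eta1s by simp
  ultimately have "eta1s \<le> eta1" by simp
  have level: "L1_exponent N s1 eta1 = L1_exponent N s1 eta2"
    by (rule L1_exponent_eq_if_L1_eq[OF s1 N eta12(1)]) (use eta12 in simp_all)
  have level_s: "L1_exponent N s1 eta1s = L1_exponent N s1 eta2s"
    using L1_exponent_eq_if_ratio_eq_one[OF \<open>eta1s > 0\<close> eta2s(1,3)] .
  have "eta1s < eta2s"
  proof (rule ccontr)
    assume "\<not> eta1s < eta2s"
    then have "real N * s1 < eta1s"
      using L1_exponent_level_set_straddles(2)[OF s1 N eta2s(1) _ level_s[symmetric]] eta2s(2)
      by simp
    moreover have "eta1 < real N * s1"
      using L1_exponent_level_set_straddles(1)[OF s1 N eta12(1,2) level] .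
    ultimately show False using \<open>eta1s \<le> eta1\<close> by simp
  qed
  then have "eta2 \<le> eta2s"
    using L1_exponent_level_sets_nested[OF s1 N \<open>eta1s > 0\<close> \<open>eta1s \<le> eta1\<close> eta12(2)]
      level level_s by simp
  have "upper_Gamma a (eta1 / s1) - upper_Gamma a (eta2 / s1)
      \<le> upper_Gamma a (eta1s / s1) - upper_Gamma a (eta2s / s1)"
    by (rule upper_Gamma_diff_mono[OF a]) (use \<open>eta1s > 0\<close> \<open>eta1s \<le> eta1\<close> eta12(2)
        \<open>eta2 \<le> eta2s\<close> s1 in \<open>simp_all add: divide_right_mono\<close>)
  moreover have "upper_Gamma a (eta1 / s1) - upper_Gamma a (eta2 / s1) = beta * Gamma a"
    using betaeq Gamma_pos unfolding a_def[symmetric] by (simp add: field_simps)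
  moreover have "upper_Gamma a (eta1s / s1) - upper_Gamma a (eta2s / s1) < beta * Gamma a"
    using cond Gamma_pos unfolding a_def[symmetric] by (simp add: field_simps)
  ultimately show False by simp
qed

end
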